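(* Let $\mathcal{G}=(G,(m,r))$ be an undirected, mutant-biased fitness graph on $n=|V|$ nodes, and let $S\subseteq V$ be a seed set. Let $T(\mathcal{G},S)$ denote the expected number of steps of the Heterogeneous Moran process started from $\mathcal{X}_0=S$ until it reaches one of the absorbing configurations $\emptyset$ or $V$. Then \[ T(\mathcal{G},S)\le \left(n^2\cdot\frac{m_{\max}}{r_{\min}}\right)^3, \] where $m_{\max}=\max_{u\in V} m(u)$ and $r_{\min}=\min_{u\in V} r(u)$.
   Context: A fitness graph is $\mathcal{G}=(G,(m,r))$ where $G=(V,E,w)$ is a strongly connected directed graph, $w(u,\cdot)$ is a probability distribution over the out-neighbours of $u$ (positive on edges), and $r,m\colon V\to(0,\infty)$ are the resident and mutant fitness functions. $G$ is undirected if $E$ is symmetric and $w(u,v)=1/d(u)$ for every edge $(u,v)$, where $d(u)$ is the degree of $u$. $\mathcal{G}$ is mutant-biased if $m(u)\ge r(u)$ for all $u\in V$. A configuration is a set $X\subseteq V$ (the mutants); the fitness of $u$ in $X$ is $f_X(u)=m(u)$ if $u\in X$ and $f_X(u)=r(u)$ otherwise. The Heterogeneous Moran process is the Markov chain $\mathcal{X}_0=S,\mathcal{X}_1,\dots$ where, from $\mathcal{X}_t=X$, a node $u$ is chosen with probability $f_X(u)/\sum_{v\in V}f_X(v)$, then a node $v$ is chosen with probability $w(u,v)$, and $v$ takes the type of $u$ (so $\mathcal{X}_{t+1}=X\cup\{v\}$ if $u\in X$ and $\mathcal{X}_{t+1}=X\setminus\{v\}$ otherwise). The configurations $\emptyset$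 and $V$ are absorbing. *)

theory Defs
  imports Complex_Main
begin

definition degree :: "('a \<times> 'a) set \<Rightarrow> 'a \<Rightarrow> nat" where
  "degree E u = card {v. (u, v) \<in> E}"

definition uweight :: "('a \<times> 'a) set \<Rightarrow> 'a \<Rightarrow> 'a \<Rightarrow> real" where
  "uweight E u v = (if (u, v) \<in> E then 1 / real (degree E u) else 0)"

definition fitness :: "('a \<Rightarrow> real) \<Rightarrow> ('a \<Rightarrow> real) \<Rightarrow> 'a set \<Rightarrow> 'a \<Rightarrow> real" where
  "fitness m r X u = (if u \<in> X then m u else r u)"

definition moran_update :: "'a set \<Rightarrow> 'a \<Rightarrow> 'a \<Rightarrow> 'a set" where
  "moran_update X u v = (if u \<in> X then insert v X else X - {v})"

definition moran_trans ::
  "'a set \<Rightarrow> ('a \<times> 'a) set \<Rightarrow> ('a \<Rightarrow> real) \<Rightarrow> ('a \<Rightarrow> real) \<Rightarrow> 'a set \<Rightarrow> 'a set \<Rightarrow> real" where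
  "moran_trans V E m r X Y =
     (\<Sum>u\<in>V. \<Sum>v\<in>V.
        if moran_update X u v = Y
        then fitness m r X u / (\<Sum>x\<in>V. fitness m r X x) * uweight E u v
        else 0)"

fun moran_dist ::
  "'a set \<Rightarrow> ('a \<times> 'a) set \<Rightarrow> ('a \<Rightarrow> real) \<Rightarrow> ('a \<Rightarrow> real) \<Rightarrow> 'a set \<Rightarrow> nat \<Rightarrow> 'a set \<Rightarrow> real" where
  "moran_dist V E m r S 0 Y = (if Y = S then 1 else 0)"
| "moran_dist V E m r S (Suc t) Y =
     (\<Sum>X\<in>Pow V. moran_dist V E m r S t X * moran_trans V E m r X Y)"

text \<open>Probability that the process has not been absorbed (in the empty set or V)
  by time t, i.e. Pr[tau > t], since the configurations {} and V are absorbing.\<close>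
definition not_absorbed_prob ::
  "'a set \<Rightarrow> ('a \<times> 'a) set \<Rightarrow> ('a \<Rightarrow> real) \<Rightarrow> ('a \<Rightarrow> real) \<Rightarrow> 'a set \<Rightarrow> nat \<Rightarrow> real" where
  "not_absorbed_prob V E m r S t = (\<Sum>X\<in>Pow V - {{}, V}. moran_dist V E m r S t X)"

text \<open>Expected absorption time T = E[tau] = sum over t of Pr[tau > t].\<close>
definition absorption_time ::
  "'a set \<Rightarrow> ('a \<times> 'a) set \<Rightarrow> ('a \<Rightarrow> real) \<Rightarrow> ('a \<Rightarrow> real) \<Rightarrow> 'a set \<Rightarrow> real" where
  "absorption_time V E m r S = (\<Sum>t. not_absorbed_prob V E m r S t)"

end

theory Submission
  imports Defs
begin

text \<open>
  Weight each node \<open>v\<close> by \<open>r(v) / d(v)\<close> and let \<open>\<phi>(X)\<close> be the total weight of the mutants.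
  For a mutant \<open>u\<close> with a resident neighbour \<open>v\<close>, the reproductions \<open>u \<rightarrow> v\<close> and \<open>v \<rightarrow> u\<close>
  together change \<open>\<phi>\<close> in expectation by \<open>r(v) (m(u) - r(u)) / (F d(u) d(v)) \<ge> 0\<close>, where \<open>F\<close>
  is the total fitness, so \<open>\<phi>\<close> is a submartingale in a mutant-biased graph. Moreover, as
  long as the process is not absorbed, some mutant has a resident neighbour, so \<open>\<phi>\<close> moves
  by at least \<open>r\<^sub>m\<^sub>i\<^sub>n / n\<close> with probability at least \<open>r\<^sub>m\<^sub>i\<^sub>n / (n\<^sup>2 m\<^sub>m\<^sub>a\<^sub>x)\<close>. Hence \<open>\<phi>\<^sup>2\<close> grows in expectation by at least
  \<open>L = r\<^sub>m\<^sub>i\<^sub>n\<^sup>3 / (n\<^sup>4 m\<^sub>m\<^sub>a\<^sub>x)\<close> per step, and the bounded potential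
  \<open>(\<phi>(V)\<^sup>2 - \<phi>(X)\<^sup>2) / L \<le> (n m\<^sub>m\<^sub>a\<^sub>x)\<^sup>2 / L\<close> bounds the expected absorption time
  by the additive drift argument.
\<close>

lemma additive_drift_sum_le:
  fixes \<mu> :: "nat \<Rightarrow> 's \<Rightarrow> real" and K :: "'s \<Rightarrow> 's \<Rightarrow> real"
  assumes "finite \<Omega>"
    and \<mu>_nonneg: "\<And>t X. X \<in> \<Omega> \<Longrightarrow> \<mu> t X \<ge> 0"
    and \<mu>_Suc: "\<And>t Y. Y \<in> \<Omega> \<Longrightarrow> \<mu> (Suc t) Y = (\<Sum>X\<in>\<Omega>. \<mu> t X * K X Y)"
    and h_nonneg: "\<And>X. X \<in> \<Omega> \<Longrightarrow> h X \<ge> 0"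
    and drift: "\<And>X. X \<in> \<Omega> \<Longrightarrow> (\<Sum>Y\<in>\<Omega>. K X Y * h Y) \<le> h X - c X"
  shows "(\<Sum>t<N. \<Sum>X\<in>\<Omega>. \<mu> t X * c X) \<le> (\<Sum>X\<in>\<Omega>. \<mu> 0 X * h X)"
proof -
  define G where "G t = (\<Sum>X\<in>\<Omega>. \<mu> t X * h X)" for t
  have G_Suc: "G (Suc t) \<le> G t - (\<Sum>X\<in>\<Omega>. \<mu> t X * c X)" for t
  proof -
    have "G (Suc t) = (\<Sum>Y\<in>\<Omega>. \<Sum>X\<in>\<Omega>. \<mu> t X * K X Y * h Y)"
      unfolding G_def using \<mu>_Suc by (simp add: sum_distrib_right)
    also have "\<dots> = (\<Sum>X\<in>\<Omega>. \<mu> t X * (\<Sum>Y\<in>\<Omega>. K X Y * h Y))"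
      by (subst sum.swap) (simp add: sum_distrib_left mult.assoc)
    also have "\<dots> \<le> (\<Sum>X\<in>\<Omega>. \<mu> t X * (h X - c X))"
      using drift \<mu>_nonneg by (intro sum_mono mult_left_mono) auto
    also have "\<dots> = G t - (\<Sum>X\<in>\<Omega>. \<mu> t X * c X)"
      unfolding G_def by (simp add: right_diff_distrib sum_subtractf)
    finally show ?thesis .
  qed
  have "(\<Sum>t<N. \<Sum>X\<in>\<Omega>. \<mu> t X * c X) \<le> G 0 - G N"
  proof (induction N)
    case (Suc N)
    then show ?case using G_Suc[of N] by simp
  qed simp
  moreover have "G N \<ge> 0"
    unfolding G_def using \<mu>_nonneg h_nonneg by (intro sum_nonneg mult_nonneg_nonneg) auto
  ultimately show ?thesis unfolding G_def by simp
qed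

lemma trancl_crosses_boundary:
  assumes "(a, b) \<in> E\<^sup>+" "a \<in> X" "b \<notin> X"
  obtains u v where "(u, v) \<in> E" "u \<in> X" "v \<notin> X"
proof -
  have "b \<notin> X \<longrightarrow> (\<exists>u v. (u, v) \<in> E \<and> u \<in> X \<and> v \<notin> X)"
    using assms(1)
  proof (induction rule: trancl_induct)
    case (base y)
    then show ?case using assms(2) by blast
  next
    case (step y z)
    then show ?case by blast
  qed
  then show ?thesis using assms(3) that by blast
qed

locale mutant_biased_fitness_graph =
  fixes V :: "'a set" and E :: "('a \<times> 'a) set" and m r :: "'a \<Rightarrow> real"
  assumes finite_V: "finite V" and V_nonempty: "V \<noteq> {}"
    and E_subset: "E \<subseteq> V \<times> V" and sym_E: "sym E"
    and connected: "\<forall>u\<in>V. \<forall>v\<in>V. (u, v) \<in> E\<^sup>+"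
    and r_pos: "\<forall>u\<in>V. r u > 0" and m_pos: "\<forall>u\<in>V. m u > 0"
    and mutant_biased: "\<forall>u\<in>V. m u \<ge> r u"
begin

definition "deg u = real (degree E u)"
definition "total_fitness X = (\<Sum>x\<in>V. fitness m r X x)"
definition "step_prob X u v = fitness m r X u / total_fitness X * uweight E u v"
definition "rmin = Min (r ` V)"
definition "mmax = Max (m ` V)"

lemma neighbours_subset: "{v. (u, v) \<in> E} \<subseteq> V"
  using E_subset by blast

lemma deg_pos: "u \<in> V \<Longrightarrow> deg u > 0"
proof -
  assume u: "u \<in> V"
  then have "(u, u) \<in> E\<^sup>+" using connected by blast
  then obtain v where "(u, v) \<in> E" by (meson converse_tranclE)
  moreover have "finite {v. (u, v) \<in> E}"
    using neighbours_subset finite_V finite_subset by blast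
  ultimately have "card {v. (u, v) \<in> E} > 0" using card_gt_0_iff by blast
  then show ?thesis unfolding deg_def degree_def by simp
qed

lemma deg_le_card: "deg u \<le> card V"
  unfolding deg_def degree_def using neighbours_subset finite_V by (simp add: card_mono)

lemma sum_uweight: "u \<in> V \<Longrightarrow> (\<Sum>v\<in>V. uweight E u v) = 1"
proof -
  assume u: "u \<in> V"
  have "(\<Sum>v\<in>V. uweight E u v) = (\<Sum>v\<in>V. if v \<in> {v. (u, v) \<in> E} then 1 / deg u else 0)"
    unfolding uweight_def deg_def by simp
  also have "\<dots> = (\<Sum>v\<in>V \<inter> {v. (u, v) \<in> E}. 1 / deg u)"
    using finite_V by (simp only: sum.inter_restrict)
  also have "V \<inter> {v. (u, v) \<in> E} = {v. (u, v) \<in> E}"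
    using neighbours_subset by blast
  finally show ?thesis using deg_pos[OF u] unfolding deg_def degree_def by simp
qed

lemma fitness_pos: "u \<in> V \<Longrightarrow> fitness m r X u > 0"
  unfolding fitness_def using r_pos m_pos by auto

lemma total_fitness_pos: "total_fitness X > 0"
  unfolding total_fitness_def using fitness_pos finite_V V_nonempty by (simp add: sum_pos)

lemma step_prob_nonneg: "u \<in> V \<Longrightarrow> step_prob X u v \<ge> 0"
  unfolding step_prob_def uweight_def
  using fitness_pos[of u X] total_fitness_pos[of X] by simp

lemma sum_step_prob: "(\<Sum>u\<in>V. \<Sum>v\<in>V. step_prob X u v) = 1"
proof -
  have "(\<Sum>u\<in>V. \<Sum>v\<in>V. step_prob X u v)
      = (\<Sum>u\<in>V. fitness m r X u / total_fitness X * (\<Sum>v\<in>V. uweight E u v))"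
    unfolding step_prob_def by (simp add: sum_distrib_left)
  also have "\<dots> = (\<Sum>u\<in>V. fitness m r X u / total_fitness X)"
    using sum_uweight by simp
  also have "\<dots> = 1"
    using total_fitness_pos[of X] unfolding total_fitness_def by (simp add: sum_divide_distrib[symmetric])
  finally show ?thesis .
qed

lemma moran_trans_nonneg: "moran_trans V E m r X Y \<ge> 0"
  unfolding moran_trans_def using step_prob_nonneg
  by (intro sum_nonneg) (auto simp: step_prob_def total_fitness_def)

lemma moran_dist_nonneg: "moran_dist V E m r S t Y \<ge> 0"
  by (induction t arbitrary: Y) (auto intro!: sum_nonneg mult_nonneg_nonneg moran_trans_nonneg)

lemma moran_update_subset: "X \<subseteq> V \<Longrightarrow> v \<in> V \<Longrightarrow> moran_update X u v \<subseteq> V"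
  unfolding moran_update_def by auto

lemma moran_trans_expectation:
  assumes "X \<subseteq> V"
  shows "(\<Sum>Y\<in>Pow V. moran_trans V E m r X Y * g Y)
       = (\<Sum>u\<in>V. \<Sum>v\<in>V. step_prob X u v * g (moran_update X u v))"
proof -
  have "(\<Sum>Y\<in>Pow V. moran_trans V E m r X Y * g Y)
      = (\<Sum>Y\<in>Pow V. \<Sum>u\<in>V. \<Sum>v\<in>V. if moran_update X u v = Y then step_prob X u v * g Y else 0)"
    unfolding moran_trans_def step_prob_def total_fitness_def sum_distrib_right
    by (intro sum.cong refl) auto
  also have "\<dots> = (\<Sum>u\<in>V. \<Sum>v\<in>V. \<Sum>Y\<in>Pow V. if moran_update X u v = Y then step_prob X u v * g Y else 0)"
    by (subst sum.swap) (subst sum.swap, rule refl)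
  also have "\<dots> = (\<Sum>u\<in>V. \<Sum>v\<in>V. step_prob X u v * g (moran_update X u v))"
    using moran_update_subset[OF assms] finite_V by (intro sum.cong refl) (simp add: sum.delta)
  finally show ?thesis .
qed

definition "potential X = (\<Sum>x\<in>X. r x / deg x)"

definition "potential_step X u v =
  (if u \<in> X \<and> v \<notin> X then r v / deg v else if u \<notin> X \<and> v \<in> X then - (r v / deg v) else 0)"

lemma potential_nonneg: "X \<subseteq> V \<Longrightarrow> potential X \<ge> 0"
  unfolding potential_def using r_pos deg_pos
  by (intro sum_nonneg) (metis divide_nonneg_pos less_eq_real_def subsetD)

lemma potential_le_potential_V: "X \<subseteq> V \<Longrightarrow> potential X \<le> potential V"
  unfolding potential_def using r_pos deg_pos finite_V
  by (intro sum_mono2) (auto intro: divide_nonneg_pos less_imp_le)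

lemma potential_moran_update:
  assumes "X \<subseteq> V"
  shows "potential (moran_update X u v) = potential X + potential_step X u v"
proof -
  have "finite X" using assms finite_V finite_subset by blast
  then show ?thesis
    unfolding moran_update_def potential_step_def potential_def
    by (auto simp: sum_diff1 insert_absorb)
qed

lemma potential_step_pair_nonneg:
  assumes "u \<in> V" "v \<in> V"
  shows "step_prob X u v * potential_step X u v + step_prob X v u * potential_step X v u \<ge> 0"
proof (cases "(u, v) \<in> E \<and> (u \<in> X \<longleftrightarrow> v \<notin> X)")
  case False
  then consider "(u, v) \<notin> E \<and> (v, u) \<notin> E" | "u \<in> X \<longleftrightarrow> v \<in> X"
    using sym_E by (meson symD)
  then show ?thesis
    by cases (auto simp: step_prob_def uweight_def potential_step_def)
next
  case True
  then have vu: "(v, u) \<in> E" using sym_E by (meson symD)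
  have pos: "deg u > 0" "deg v > 0" "total_fitness X > 0" "r u > 0" "r v > 0"
    using deg_pos total_fitness_pos r_pos assms by auto
  have bias: "m u \<ge> r u" "m v \<ge> r v" using mutant_biased assms by auto
  consider "u \<in> X" "v \<notin> X" | "u \<notin> X" "v \<in> X" using True by blast
  then show ?thesis
  proof cases
    case 1
    have "step_prob X u v * potential_step X u v + step_prob X v u * potential_step X v u
        = r v * (m u - r u) / (total_fitness X * deg u * deg v)"
      using 1 True vu pos
      unfolding step_prob_def potential_step_def uweight_def fitness_def deg_def[symmetric]
      by (simp add: field_simps)
    then show ?thesis using pos bias by simp
  next
    case 2
    have "step_prob X u v * potential_step X u v + step_prob X v u * potential_step X v u
        = r u * (m v - r v) / (total_fitness X * deg u * deg v)"
      using 2 True vu pos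
      unfolding step_prob_def potential_step_def uweight_def fitness_def deg_def[symmetric]
      by (simp add: field_simps)
    then show ?thesis using pos bias by simp
  qed
qed

lemma potential_drift_nonneg:
  "(\<Sum>u\<in>V. \<Sum>v\<in>V. step_prob X u v * potential_step X u v) \<ge> 0"
proof -
  let ?t = "\<lambda>u v. step_prob X u v * potential_step X u v"
  have "2 * (\<Sum>u\<in>V. \<Sum>v\<in>V. ?t u v) = (\<Sum>u\<in>V. \<Sum>v\<in>V. ?t u v) + (\<Sum>u\<in>V. \<Sum>v\<in>V. ?t v u)"
    by (subst (2) sum.swap) simp
  also have "\<dots> = (\<Sum>u\<in>V. \<Sum>v\<in>V. ?t u v + ?t v u)"
    by (simp add: sum.distrib)
  also have "\<dots> \<ge> 0"
    using potential_step_pair_nonneg by (intro sum_nonneg) auto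
  finally show ?thesis by simp
qed

lemma potential_sq_expectation_ge:
  assumes "X \<subseteq> V"
  shows "(\<Sum>u\<in>V. \<Sum>v\<in>V. step_prob X u v * potential (moran_update X u v) ^ 2)
    \<ge> potential X ^ 2 + (\<Sum>u\<in>V. \<Sum>v\<in>V. step_prob X u v * potential_step X u v ^ 2)"
proof -
  have "(\<Sum>u\<in>V. \<Sum>v\<in>V. step_prob X u v * potential (moran_update X u v) ^ 2)
      = potential X ^ 2 * (\<Sum>u\<in>V. \<Sum>v\<in>V. step_prob X u v)
        + 2 * potential X * (\<Sum>u\<in>V. \<Sum>v\<in>V. step_prob X u v * potential_step X u v)
        + (\<Sum>u\<in>V. \<Sum>v\<in>V. step_prob X u v * potential_step X u v ^ 2)"
    using potential_moran_update[OF assms]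
    by (simp add: power2_eq_square algebra_simps sum.distrib sum_distrib_left)
  then show ?thesis
    using sum_step_prob[of X] potential_drift_nonneg[of X] potential_nonneg[OF assms] by simp
qed

lemma rmin_pos: "rmin > 0"
  unfolding rmin_def using finite_V V_nonempty r_pos by simp

lemma rmin_le: "u \<in> V \<Longrightarrow> rmin \<le> r u"
  unfolding rmin_def using finite_V by simp

lemma mmax_ge: "u \<in> V \<Longrightarrow> m u \<le> mmax"
  unfolding mmax_def using finite_V by simp

lemma card_V_ge_1: "real (card V) \<ge> 1"
  using finite_V V_nonempty by (simp add: Suc_leI card_gt_0_iff)

lemma total_fitness_le: "total_fitness X \<le> card V * mmax"
  unfolding total_fitness_def
  by (rule sum_bounded_above) (use mmax_ge mutant_biased in \<open>force simp: fitness_def\<close>)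

lemma mmax_pos: "mmax > 0"
  using V_nonempty mmax_ge m_pos by force

definition "step_variance_bound = rmin ^ 3 / (real (card V) ^ 4 * mmax)"

lemma step_variance_bound_pos: "step_variance_bound > 0"
  unfolding step_variance_bound_def using rmin_pos card_V_ge_1 mmax_pos by simp

lemma step_variance_ge:
  assumes "X \<subseteq> V" "X \<noteq> {}" "X \<noteq> V"
  shows "(\<Sum>u\<in>V. \<Sum>v\<in>V. step_prob X u v * potential_step X u v ^ 2) \<ge> step_variance_bound"
proof -
  let ?n = "real (card V)"
  obtain a b where "a \<in> X" "b \<in> V" "b \<notin> X" using assms by blast
  moreover have "(a, b) \<in> E\<^sup>+" using connected calculation assms(1) by blast
  ultimately obtain u v where uv: "(u, v) \<in> E" "u \<in> X" "v \<notin> X"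
    using trancl_crosses_boundary by metis
  have uV: "u \<in> V" and vV: "v \<in> V" using uv E_subset by auto
  have deg: "0 < deg u" "deg u \<le> ?n" "0 < deg v" "deg v \<le> ?n"
    using deg_pos deg_le_card uV vV by auto
  have F: "0 < total_fitness X" "total_fitness X \<le> ?n * mmax"
    using total_fitness_pos total_fitness_le by auto
  have m_u: "rmin \<le> m u" using rmin_le[OF uV] mutant_biased uV by force
  have select: "rmin / (?n * mmax * ?n) \<le> m u / (total_fitness X * deg u)"
    using F deg m_u rmin_pos by (intro frac_le mult_mono) auto
  have jump: "(rmin / ?n) ^ 2 \<le> (r v / deg v) ^ 2"
    using rmin_le[OF vV] deg rmin_pos card_V_ge_1 by (intro power_mono frac_le) auto
  have "step_variance_bound = rmin / (?n * mmax * ?n) * (rmin / ?n) ^ 2"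
    unfolding step_variance_bound_def by (simp add: power2_eq_square power3_eq_cube power4_eq_xxxx mult_ac)
  also have "\<dots> \<le> m u / (total_fitness X * deg u) * (r v / deg v) ^ 2"
    using select jump m_pos uV F deg by (intro mult_mono) auto
  also have "\<dots> = step_prob X u v * potential_step X u v ^ 2"
    using uv unfolding step_prob_def potential_step_def uweight_def fitness_def deg_def[symmetric]
    by simp
  also have "\<dots> \<le> (\<Sum>v'\<in>V. step_prob X u v' * potential_step X u v' ^ 2)"
    using step_prob_nonneg[OF uV] finite_V vV by (intro member_le_sum) auto
  also have "\<dots> \<le> (\<Sum>u'\<in>V. \<Sum>v'\<in>V. step_prob X u' v' * potential_step X u' v' ^ 2)"
    using step_prob_nonneg finite_V uV by (intro member_le_sum sum_nonneg) auto
  finally show ?thesis .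
qed

definition "lyapunov X = (potential V ^ 2 - potential X ^ 2) / step_variance_bound"

lemma lyapunov_nonneg: "X \<subseteq> V \<Longrightarrow> lyapunov X \<ge> 0"
  unfolding lyapunov_def using step_variance_bound_pos potential_nonneg potential_le_potential_V
  by (intro divide_nonneg_pos) (auto intro!: power_mono)

lemma lyapunov_drift:
  assumes "X \<subseteq> V"
  shows "(\<Sum>Y\<in>Pow V. moran_trans V E m r X Y * lyapunov Y)
    \<le> lyapunov X - of_bool (X \<notin> {{}, V})"
proof -
  let ?E2 = "\<Sum>u\<in>V. \<Sum>v\<in>V. step_prob X u v * potential (moran_update X u v) ^ 2"
  have "(\<Sum>u\<in>V. \<Sum>v\<in>V. step_prob X u v * potential_step X u v ^ 2) \<ge> 0"
    using step_prob_nonneg by (intro sum_nonneg mult_nonneg_nonneg) auto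
  then have "potential X ^ 2 + step_variance_bound * of_bool (X \<notin> {{}, V}) \<le> ?E2"
    using potential_sq_expectation_ge[OF assms] step_variance_ge[OF assms]
    by (cases "X \<in> {{}, V}") auto
  moreover have "(\<Sum>Y\<in>Pow V. moran_trans V E m r X Y * lyapunov Y)
      = (potential V ^ 2 - ?E2) / step_variance_bound"
    unfolding moran_trans_expectation[OF assms] lyapunov_def
    using sum_step_prob[of X]
    by (simp add: sum_divide_distrib[symmetric] right_diff_distrib sum_subtractf
        sum_distrib_left[symmetric] mult.commute)
  ultimately show ?thesis
    using step_variance_bound_pos unfolding lyapunov_def by (simp add: field_simps)
qed

lemma lyapunov_le: "X \<subseteq> V \<Longrightarrow> lyapunov X \<le> (real (card V) ^ 2 * (mmax / rmin)) ^ 3"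
proof -
  assume "X \<subseteq> V"
  have "potential V \<le> card V * mmax"
    unfolding potential_def
  proof (rule sum_bounded_above)
    fix x assume x: "x \<in> V"
    have "r x / deg x \<le> r x"
      using deg_pos[OF x] r_pos x unfolding deg_def by (simp add: divide_le_eq)
    also have "\<dots> \<le> mmax" using mutant_biased mmax_ge x by force
    finally show "r x / deg x \<le> mmax" .
  qed
  then have "potential V ^ 2 \<le> (card V * mmax) ^ 2"
    using potential_nonneg[of V] by (intro power_mono) auto
  then have "potential V ^ 2 - potential X ^ 2 \<le> (card V * mmax) ^ 2"
    using zero_le_power2[of "potential X"] by linarith
  then have "lyapunov X \<le> (card V * mmax) ^ 2 / step_variance_bound"
    unfolding lyapunov_def using step_variance_bound_pos by (intro divide_right_mono) auto
  also have "\<dots> = (real (card V) ^ 2 * (mmax / rmin)) ^ 3"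
    unfolding step_variance_bound_def using rmin_pos card_V_ge_1
    by (simp add: field_simps power2_eq_square power3_eq_cube power4_eq_xxxx)
  finally show ?thesis .
qed

lemma absorption_time_le_lyapunov:
  assumes "S \<subseteq> V"
  shows "summable (not_absorbed_prob V E m r S) \<and> absorption_time V E m r S \<le> lyapunov S"
proof -
  have not_absorbed_eq: "not_absorbed_prob V E m r S t
      = (\<Sum>X\<in>Pow V. moran_dist V E m r S t X * of_bool (X \<notin> {{}, V}))" for t
  proof -
    have "Pow V - {{}, V} = Pow V \<inter> {X. X \<notin> {{}, V}}" by blast
    then show ?thesis
      unfolding not_absorbed_prob_def using finite_V by (simp add: sum.inter_restrict)
  qed
  have partial_sums: "(\<Sum>t<N. not_absorbed_prob V E m r S t) \<le> lyapunov S" for N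
  proof -
    have "(\<Sum>t<N. not_absorbed_prob V E m r S t)
        \<le> (\<Sum>X\<in>Pow V. moran_dist V E m r S 0 X * lyapunov X)"
      unfolding not_absorbed_eq
      using finite_V moran_dist_nonneg lyapunov_nonneg lyapunov_drift
      by (intro additive_drift_sum_le[where K = "moran_trans V E m r"]) auto
    also have "\<dots> = (\<Sum>X\<in>Pow V. if X = S then lyapunov X else 0)"
      by (intro sum.cong) auto
    also have "\<dots> = lyapunov S" using assms finite_V by (simp add: sum.delta)
    finally show ?thesis .
  qed
  have "summable (not_absorbed_prob V E m r S)"
    using partial_sums moran_dist_nonneg
    by (intro summableI_nonneg_bounded) (auto simp: not_absorbed_prob_def intro: sum_nonneg)
  then show ?thesis
    unfolding absorption_time_def using partial_sums suminf_le_const by blast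
qed

end

theorem lemma1:
  fixes V :: "'a set" and E :: "('a \<times> 'a) set" and m r :: "'a \<Rightarrow> real" and S :: "'a set"
  assumes "finite V" and "V \<noteq> {}"
    and "E \<subseteq> V \<times> V" and "sym E"
    and "\<forall>u\<in>V. \<forall>v\<in>V. (u, v) \<in> E\<^sup>+"
    and "\<forall>u\<in>V. r u > 0" and "\<forall>u\<in>V. m u > 0"
    and "\<forall>u\<in>V. m u \<ge> r u"
    and "S \<subseteq> V"
  shows "summable (not_absorbed_prob V E m r S) \<and>
         absorption_time V E m r S
           \<le> (real (card V) ^ 2 * (Max (m ` V) / Min (r ` V))) ^ 3"
proof -
  interpret mutant_biased_fitness_graph V E m r
    using assms by unfold_locales auto
  show ?thesis
    using absorption_time_le_lyapunov[OF \<open>S \<subseteq> V\<close>] lyapunov_le[OF \<open>S \<subseteq> V\<close>]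
    unfolding mmax_def rmin_def by linarith
qed

end
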